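(* Let $\rho_{AB}$ be positive semidefinite on $\mathcal{H}_A\otimes\mathcal{H}_B$ with $0<\operatorname{tr}\rho_{AB}\le1$. Then $$\hat H_{\min}(A|B)_\rho\le H_{\min}(A|B)_\rho-\log\frac{1}{\operatorname{tr}\rho_{AB}}.$$
   Context: Hilbert spaces are finite-dimensional; $\log$ is binary. $D_{\max}(\rho\|\tau)=\inf\{\lambda\in\mathbb{R}:\rho\le2^\lambda\tau\}$. $H_{\min}(A|B)_\rho=\max_{\sigma_B}-D_{\max}(\rho_{AB}\|\mathbb{1}_A\otimes\sigma_B)$, max over normalized density operators $\sigma_B$; $\hat H_{\min}(A|B)_\rho=-D_{\max}(\rho_{AB}\|\mathbb{1}_A\otimes\rho_B)$ with $\rho_B=\operatorname{tr}_A\rho_{AB}$. *)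

theory Defs
  imports Complex_Main "HOL-Library.Extended_Real"
begin

text \<open>Operators on a finite-dimensional Hilbert space with orthonormal basis indexed by a
finite type 'i are represented as matrices  'i => 'i => complex.
H_A (x) H_B has basis indexed by 'a \<times> 'b.\<close>

type_synonym 'i op = "'i \<Rightarrow> 'i \<Rightarrow> complex"

definition hermitian :: "'i::finite op \<Rightarrow> bool" where
  "hermitian M \<longleftrightarrow> (\<forall>i j. M j i = cnj (M i j))"

definition qform :: "'i::finite op \<Rightarrow> ('i \<Rightarrow> complex) \<Rightarrow> complex" where
  "qform M v = (\<Sum>i\<in>UNIV. \<Sum>j\<in>UNIV. cnj (v i) * M i j * v j)"

definition psd :: "'i::finite op \<Rightarrow> bool" where
  "psd M \<longleftrightarrow> hermitian M \<and> (\<forall>v. Im (qform M v) = 0 \<and> 0 \<le> Re (qform M v))"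

definition loewner_le :: "'i::finite op \<Rightarrow> 'i op \<Rightarrow> bool" where
  "loewner_le M N \<longleftrightarrow> psd (\<lambda>i j. N i j - M i j)"

definition tr :: "'i::finite op \<Rightarrow> complex" where
  "tr M = (\<Sum>i\<in>UNIV. M i i)"

definition density :: "'i::finite op \<Rightarrow> bool" where
  "density \<sigma> \<longleftrightarrow> psd \<sigma> \<and> tr \<sigma> = 1"

definition ptrA :: "('a::finite \<times> 'b::finite) op \<Rightarrow> 'b op" where
  "ptrA \<rho> = (\<lambda>b b'. \<Sum>a\<in>UNIV. \<rho> (a, b) (a, b'))"

definition id_tensor :: "'b::finite op \<Rightarrow> ('a::finite \<times> 'b) op" where
  "id_tensor \<sigma> = (\<lambda>(a, b) (a', b'). if a = a' then \<sigma> b b' else 0)"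

definition Dmax :: "'i::finite op \<Rightarrow> 'i op \<Rightarrow> ereal" where
  "Dmax \<rho> \<tau> = Inf {ereal l | l. loewner_le \<rho> (\<lambda>i j. complex_of_real (2 powr l) * \<tau> i j)}"

definition Hmin :: "('a::finite \<times> 'b::finite) op \<Rightarrow> ereal" where
  "Hmin \<rho> = Sup {- Dmax \<rho> (id_tensor \<sigma> :: ('a \<times> 'b) op) | \<sigma>. density \<sigma>}"

definition Hmin_hat :: "('a::finite \<times> 'b::finite) op \<Rightarrow> ereal" where
  "Hmin_hat \<rho> = - Dmax \<rho> (id_tensor (ptrA \<rho>) :: ('a \<times> 'b) op)"

end

theory Submission
  imports Defs
begin

text \<open>The normalised marginal \<open>\<sigma>\<^sub>B = \<rho>\<^sub>B / tr \<rho>\<close> is a density operator, so it competes in the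
  maximisation defining \<open>H\<^sub>m\<^sub>i\<^sub>n\<close>. Rescaling the reference operator by a positive \<open>c\<close> shifts
  \<open>D\<^sub>m\<^sub>a\<^sub>x\<close> by exactly \<open>-log c\<close>, hence
  \<open>H\<^sub>m\<^sub>i\<^sub>n(A|B) \<ge> -D\<^sub>m\<^sub>a\<^sub>x(\<rho>\<^sub>A\<^sub>B \<parallel> 1\<^sub>A \<otimes> \<sigma>\<^sub>B) = \<hat>H\<^sub>m\<^sub>i\<^sub>n(A|B) + log (1 / tr \<rho>)\<close>.\<close>

lemma sum_UNIV_prod:
  "(\<Sum>x\<in>(UNIV::('a::finite \<times> 'b::finite) set). f x) = (\<Sum>a\<in>UNIV. \<Sum>b\<in>UNIV. f (a, b))"
  by (simp add: sum.cartesian_product UNIV_Times_UNIV[symmetric] del: UNIV_Times_UNIV)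

definition embed_at :: "'a \<Rightarrow> ('b \<Rightarrow> complex) \<Rightarrow> ('a::finite \<times> 'b::finite) \<Rightarrow> complex" where
  "embed_at a v = (\<lambda>(a', b). if a' = a then v b else 0)"

lemma embed_at_apply [simp]: "embed_at a v (a', b) = (if a' = a then v b else 0)"
  by (simp add: embed_at_def)

lemma qform_embed_at:
  "qform \<rho> (embed_at a v) = (\<Sum>b\<in>UNIV. \<Sum>b'\<in>UNIV. cnj (v b) * \<rho> (a, b) (a, b') * v b')"
proof -
  have row: "(\<Sum>a2\<in>UNIV. \<Sum>b2\<in>UNIV. cnj (embed_at a v (a1, b1)) * \<rho> (a1, b1) (a2, b2) * embed_at a v (a2, b2))
      = (if a1 = a then \<Sum>b2\<in>UNIV. cnj (v b1) * \<rho> (a, b1) (a, b2) * v b2 else 0)" for a1 b1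
    by (cases "a1 = a") (simp_all add: if_distrib[where f="\<lambda>x. _ * x"] cong: if_cong, subst sum.swap, simp)
  show ?thesis
    unfolding qform_def sum_UNIV_prod row by (subst sum.swap) simp
qed

lemma qform_ptrA: "qform (ptrA \<rho>) v = (\<Sum>a\<in>UNIV. qform \<rho> (embed_at a v))"
proof -
  have "qform (ptrA \<rho>) v = (\<Sum>b\<in>UNIV. \<Sum>b'\<in>UNIV. \<Sum>a\<in>UNIV. cnj (v b) * \<rho> (a, b) (a, b') * v b')"
    unfolding qform_def ptrA_def by (simp add: sum_distrib_left sum_distrib_right)
  also have "\<dots> = (\<Sum>b\<in>UNIV. \<Sum>a\<in>UNIV. \<Sum>b'\<in>UNIV. cnj (v b) * \<rho> (a, b) (a, b') * v b')"
    by (intro sum.cong refl sum.swap)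
  also have "\<dots> = (\<Sum>a\<in>UNIV. \<Sum>b\<in>UNIV. \<Sum>b'\<in>UNIV. cnj (v b) * \<rho> (a, b) (a, b') * v b')"
    by (rule sum.swap)
  finally show ?thesis
    unfolding qform_embed_at .
qed

lemma hermitian_ptrA:
  assumes "hermitian \<rho>"
  shows "hermitian (ptrA \<rho>)"
  unfolding hermitian_def ptrA_def
proof (intro allI)
  fix b b'
  show "(\<Sum>a\<in>UNIV. \<rho> (a, b') (a, b)) = cnj (\<Sum>a\<in>UNIV. \<rho> (a, b) (a, b'))"
    using assms unfolding hermitian_def cnj_sum by (intro sum.cong) blast+
qed

lemma psd_ptrA:
  assumes "psd \<rho>"
  shows "psd (ptrA \<rho>)"
proof -
  have slice: "Im (qform \<rho> w) = 0" "0 \<le> Re (qform \<rho> w)" for w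
    using assms unfolding psd_def by auto
  have "Im (qform (ptrA \<rho>) v) = 0" for v
    unfolding qform_ptrA Im_sum using slice by simp
  moreover have "0 \<le> Re (qform (ptrA \<rho>) v)" for v
    unfolding qform_ptrA Re_sum using slice by (simp add: sum_nonneg)
  ultimately show ?thesis
    using assms hermitian_ptrA unfolding psd_def by blast
qed

lemma tr_ptrA: "tr (ptrA \<rho>) = tr \<rho>"
  unfolding tr_def ptrA_def sum_UNIV_prod by (rule sum.swap)

lemma psd_scale:
  assumes "psd M" and "0 \<le> c"
  shows "psd (\<lambda>i j. complex_of_real c * M i j)"
proof -
  have "qform (\<lambda>i j. complex_of_real c * M i j) v = complex_of_real c * qform M v" for v
    unfolding qform_def sum_distrib_left by (intro sum.cong refl) (simp add: mult.left_commute)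
  moreover have "hermitian (\<lambda>i j. complex_of_real c * M i j)"
    using assms(1) unfolding psd_def hermitian_def by (metis complex_cnj_mult complex_cnj_complex_of_real)
  moreover have "Im (qform M v) = 0" "0 \<le> Re (qform M v)" for v
    using assms(1) unfolding psd_def by auto
  ultimately show ?thesis
    using assms(2) unfolding psd_def by simp
qed

lemma tr_scale: "tr (\<lambda>i j. c * M i j) = c * tr M"
  unfolding tr_def by (simp add: sum_distrib_left)

lemma hermitian_tr_real:
  assumes "hermitian M"
  shows "tr M = complex_of_real (Re (tr M))"
proof -
  have "Im (M i i) = 0" for i
    using assms[unfolded hermitian_def, rule_format, of i i] by (metis cnj.sel(2) neg_equal_zero)
  then show ?thesis
    unfolding tr_def by (simp add: complex_eq_iff Im_sum)
qed

lemma density_normalized_ptrA: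
  assumes "psd \<rho>" and "0 < Re (tr \<rho>)"
  shows "density (\<lambda>b b'. complex_of_real (1 / Re (tr \<rho>)) * ptrA \<rho> b b')"
proof -
  have "tr (ptrA \<rho>) = complex_of_real (Re (tr \<rho>))"
    using assms(1) hermitian_tr_real unfolding tr_ptrA psd_def by blast
  then have "complex_of_real (1 / Re (tr \<rho>)) * tr (ptrA \<rho>) = 1"
    using assms(2) by (simp flip: of_real_mult)
  then show ?thesis
    using assms unfolding density_def tr_scale by (simp add: psd_scale psd_ptrA del: of_real_divide)
qed

lemma id_tensor_scale:
  "id_tensor (\<lambda>b b'. c * \<sigma> b b') = (\<lambda>i j. c * (id_tensor \<sigma> :: ('a::finite \<times> 'b::finite) op) i j)"
  by (auto simp: id_tensor_def fun_eq_iff)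

lemma Dmax_scale_le:
  fixes \<tau> :: "'i::finite op"
  assumes "0 < c"
  shows "Dmax \<rho> (\<lambda>i j. complex_of_real c * \<tau> i j) \<le> Dmax \<rho> \<tau> - ereal (log 2 c)"
proof -
  have "Dmax \<rho> (\<lambda>i j. complex_of_real c * \<tau> i j) + ereal (log 2 c) \<le> ereal l"
    if "loewner_le \<rho> (\<lambda>i j. complex_of_real (2 powr l) * \<tau> i j)" for l
  proof -
    have "2 powr (l - log 2 c) * c = 2 powr l"
      using assms by (simp add: powr_diff)
    then have "loewner_le \<rho> (\<lambda>i j. complex_of_real (2 powr (l - log 2 c)) * (complex_of_real c * \<tau> i j))"
      using that by (simp add: mult.assoc[symmetric] flip: of_real_mult)
    then have "Dmax \<rho> (\<lambda>i j. complex_of_real c * \<tau> i j) \<le> ereal (l - log 2 c)"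
      unfolding Dmax_def by (intro Inf_lower) blast
    then show ?thesis
      using ereal_le_minus[of "ereal (log 2 c)" _ "ereal l"] by simp
  qed
  then have "Dmax \<rho> (\<lambda>i j. complex_of_real c * \<tau> i j) + ereal (log 2 c) \<le> Dmax \<rho> \<tau>"
    unfolding Dmax_def[of \<rho> \<tau>] by (intro Inf_greatest) blast
  then show ?thesis
    by (simp add: ereal_le_minus)
qed

lemma Dmax_scale:
  fixes \<tau> :: "'i::finite op"
  assumes "0 < c"
  shows "Dmax \<rho> (\<lambda>i j. complex_of_real c * \<tau> i j) = Dmax \<rho> \<tau> - ereal (log 2 c)"
proof (rule antisym)
  have "(\<lambda>i j. complex_of_real (1 / c) * (complex_of_real c * \<tau> i j)) = \<tau>"
    using assms by simp
  then have "Dmax \<rho> \<tau> \<le> Dmax \<rho> (\<lambda>i j. complex_of_real c * \<tau> i j) - ereal (log 2 (1 / c))"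
    using Dmax_scale_le[of "1 / c" \<rho> "\<lambda>i j. complex_of_real c * \<tau> i j"] assms by simp
  also have "\<dots> = Dmax \<rho> (\<lambda>i j. complex_of_real c * \<tau> i j) + ereal (log 2 c)"
    using assms by (simp add: log_divide minus_ereal_def)
  finally show "Dmax \<rho> \<tau> - ereal (log 2 c) \<le> Dmax \<rho> (\<lambda>i j. complex_of_real c * \<tau> i j)"
    by (simp add: ereal_minus_le)
qed (rule Dmax_scale_le[OF assms])

theorem lemma14:
  fixes \<rho> :: "('a::finite \<times> 'b::finite) op"
  assumes "psd \<rho>"
    and "0 < Re (tr \<rho>)" and "Re (tr \<rho>) \<le> 1"
  shows "Hmin_hat \<rho> \<le> Hmin \<rho> - ereal (log 2 (1 / Re (tr \<rho>)))"
proof -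
  define c where "c = 1 / Re (tr \<rho>)"
  define \<sigma> where "\<sigma> = (\<lambda>b b'. complex_of_real c * ptrA \<rho> b b')"
  have "c > 0"
    using assms(2) by (simp add: c_def)
  have "density \<sigma>"
    unfolding \<sigma>_def c_def using assms(1,2) by (rule density_normalized_ptrA)
  then have "- Dmax \<rho> (id_tensor \<sigma> :: ('a \<times> 'b) op) \<le> Hmin \<rho>"
    unfolding Hmin_def by (intro Sup_upper) blast
  moreover have "- Dmax \<rho> (id_tensor \<sigma> :: ('a \<times> 'b) op) = Hmin_hat \<rho> + ereal (log 2 c)"
    unfolding \<sigma>_def id_tensor_scale Dmax_scale[OF \<open>c > 0\<close>] Hmin_hat_def
    by (cases "Dmax \<rho> (id_tensor (ptrA \<rho>) :: ('a \<times> 'b) op)") simp_all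
  ultimately have "Hmin_hat \<rho> + ereal (log 2 c) \<le> Hmin \<rho>"
    by simp
  then show ?thesis
    unfolding c_def by (simp add: ereal_le_minus)
qed

end
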